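(* Let $r\ge1$ and $n\ge2r$. For every integer $i\ge0$, the restricted Casimir polynomial $C_{2i+1}(x_1,\dots,x_r)$ lies in the subalgebra of $\mathbb{C}[x_1,\dots,x_r]$ generated by the constants and the polynomials $C_{2k}(x_1,\dots,x_r)$ for $k\ge1$.
   Context: Casimir eigenvalues. For $\nu=(\nu_1,\dots,\nu_n)$ and an integer $p\ge 0$, let $$c_p(\nu)=\sum_{i=1}^n(\nu_i+n-i)^p\prod_{j\ne i}\Bigl(1-\frac{1}{\nu_i-\nu_j+j-i}\Bigr).$$ This rational expression is in fact a polynomial in $\nu$; it is the eigenvalue of the higher Casimir operator $\mathrm{tr}(\mathbf E^p)$ of $\mathfrak{gl}_n$ on the irreducible module of highest weight $\nu$. The restricted Casimir polynomial is $$C_p(x_1,\dots,x_r)=c_p(x_1,\dots,x_r,\underbrace{0,\dots,0}_{n-2r},-x_r,\dots,-x_1).$$ *)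

theory Defs
  imports Complex_Main
begin

text \<open>Casimir eigenvalue c_p(nu) for gl_n; nu is indexed by 1..n.
  This is the rational expression from the paper; it agrees with the
  polynomial c_p at every nu where all denominators are nonzero.\<close>
definition casimir_ev :: "nat \<Rightarrow> nat \<Rightarrow> (nat \<Rightarrow> complex) \<Rightarrow> complex" where
  "casimir_ev n p nu =
     (\<Sum>i\<in>{1..n}. (nu i + of_nat n - of_nat i) ^ p *
        (\<Prod>j\<in>{1..n} - {i}. (1 - 1 / (nu i - nu j + of_nat j - of_nat i))))"

definition restr_weight :: "nat \<Rightarrow> nat \<Rightarrow> (nat \<Rightarrow> complex) \<Rightarrow> nat \<Rightarrow> complex" where
  "restr_weight r n x i =
     (if i \<le> r then x i else if i \<le> n - r then 0 else - x (n + 1 - i))"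

definition restr_casimir :: "nat \<Rightarrow> nat \<Rightarrow> nat \<Rightarrow> (nat \<Rightarrow> complex) \<Rightarrow> complex" where
  "restr_casimir r n p x = casimir_ev n p (restr_weight r n x)"

text \<open>Points x where no denominator in the defining expression vanishes
  (a nonempty Zariski-open, hence dense, subset of C^r).\<close>
definition casimir_generic :: "nat \<Rightarrow> nat \<Rightarrow> (nat \<Rightarrow> complex) \<Rightarrow> bool" where
  "casimir_generic r n x \<longleftrightarrow>
     (\<forall>i\<in>{1..n}. \<forall>j\<in>{1..n}. i \<noteq> j \<longrightarrow>
        restr_weight r n x i - restr_weight r n x j + of_nat j - of_nat i \<noteq> 0)"

inductive_set even_casimir_subalg :: "nat \<Rightarrow> nat \<Rightarrow> ((nat \<Rightarrow> complex) \<Rightarrow> complex) set"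
  for r n :: nat where
  const: "(\<lambda>_. c) \<in> even_casimir_subalg r n"
| gen: "k \<ge> 1 \<Longrightarrow> restr_casimir r n (2 * k) \<in> even_casimir_subalg r n"
| add: "f \<in> even_casimir_subalg r n \<Longrightarrow> g \<in> even_casimir_subalg r n \<Longrightarrow>
          (\<lambda>x. f x + g x) \<in> even_casimir_subalg r n"
| mult: "f \<in> even_casimir_subalg r n \<Longrightarrow> g \<in> even_casimir_subalg r n \<Longrightarrow>
          (\<lambda>x. f x * g x) \<in> even_casimir_subalg r n"

end

theory Submission
  imports Defs "HOL-Computational_Algebra.Polynomial_FPS"
begin

(* Put l_i = nu_i + n - i and a_i = prod_{j ~= i} (1 - 1/(l_i - l_j)), so that
   c_p(nu) = sum_i a_i l_i^p.  For any distinct e_1, ..., e_n (the a_i depend only on the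
   differences), Lagrange interpolation of u |-> prod_j (u - e_j - 1) at the nodes e_i shows
   that the power sums d_q = sum_i a_i e_i^q have the generating function
     1 - t * sum_q d_q t^q = prod_j (1 - (e_j + 1) t) / prod_j (1 - e_j t),
   and in particular d_0 = n.  For the restricted weight, the centred values
   e_i = l_i - n/2 satisfy e_{n+1-i} = -1 - e_i, so the numerator is the denominator at -t
   and the right-hand side G(t) satisfies G(t) G(-t) = 1.  Comparing coefficients expresses
   every odd d_N as a quadratic polynomial in d_0, ..., d_{N-1}.  As the c_p and the d_q are
   binomial transforms of each other, induction on p puts every C_p, on the dense set where
   the defining expression makes sense, into the algebra generated by the constants and the
   even C_{2k}. *)

unbundle fps_syntax

definition casimir_coeff :: "'b set \<Rightarrow> ('b \<Rightarrow> 'a::field) \<Rightarrow> 'b \<Rightarrow> 'a" where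
  "casimir_coeff I e i = (\<Prod>j\<in>I - {i}. 1 - 1 / (e i - e j))"

definition casimir_power_sum :: "'b set \<Rightarrow> ('b \<Rightarrow> 'a::field) \<Rightarrow> nat \<Rightarrow> 'a" where
  "casimir_power_sum I e p = (\<Sum>i\<in>I. casimir_coeff I e i * e i ^ p)"

lemma casimir_coeff_shift: "casimir_coeff I (\<lambda>i. e i + c) = casimir_coeff I e"
  by (simp add: casimir_coeff_def fun_eq_iff)

lemma casimir_power_sum_shift:
  "casimir_power_sum I (\<lambda>i. e i + c) p =
     (\<Sum>q\<le>p. of_nat (p choose q) * c ^ (p - q) * casimir_power_sum I e q)"
  by (simp add: casimir_power_sum_def casimir_coeff_shift binomial_ring sum_distrib_left
      sum_distrib_right mult_ac flip: sum.swap[of _ I])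

lemma degree_prod_monic_linear:
  "finite I \<Longrightarrow> degree (\<Prod>j\<in>I. [:c j, 1 :: 'a::idom:]) = card I"
  by (subst degree_prod_sum_eq) auto

lemma coeff_prod_monic_linear:
  "finite I \<Longrightarrow> coeff (\<Prod>j\<in>I. [:c j, 1 :: 'a::idom:]) (card I) = 1"
  using lead_coeff_prod[of "\<lambda>j. [:c j, 1:]" I] by (simp add: degree_prod_monic_linear)

lemma prod_linear_partial_fraction:
  fixes e :: "'b \<Rightarrow> 'a::field"
  assumes "finite I" and "inj_on e I"
  shows "(\<Prod>j\<in>I. [:- e j - 1, 1:]) =
    (\<Prod>j\<in>I. [:- e j, 1:]) - (\<Sum>i\<in>I. smult (casimir_coeff I e i) (\<Prod>j\<in>I - {i}. [:- e j, 1:]))"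
    (is "?P1 = ?P0 - ?S")
proof (rule poly_eqI_degree_lead_coeff[where n = "card I" and A = "e ` I"])
  show "card (e ` I) \<ge> card I"
    using assms by (simp add: card_image)
  have "coeff (\<Prod>j\<in>I - {i}. [:- e j, 1:]) (card I) = 0" if "i \<in> I" for i
    using assms(1) that by (intro coeff_eq_0) (metis card_Diff1_less degree_prod_monic_linear finite_Diff)
  then have "coeff ?S (card I) = 0"
    by (simp add: coeff_sum)
  then show "coeff ?P1 (card I) = coeff (?P0 - ?S) (card I)"
    using coeff_prod_monic_linear[OF assms(1), of "\<lambda>j. - e j - 1"]
      coeff_prod_monic_linear[OF assms(1), of "\<lambda>j. - e j"] by simp
  show "degree ?P1 \<le> card I"
    using degree_prod_monic_linear[OF assms(1), of "\<lambda>j. - e j - 1"] by simp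
  have "degree ?S \<le> card I"
  proof (intro degree_sum_le assms(1))
    fix i
    have "degree (\<Prod>j\<in>I - {i}. [:- e j, 1:]) \<le> card I"
      using assms(1) by (simp add: degree_prod_monic_linear card_mono)
    then show "degree (smult (casimir_coeff I e i) (\<Prod>j\<in>I - {i}. [:- e j, 1:])) \<le> card I"
      using degree_smult_le order.trans by blast
  qed
  then show "degree (?P0 - ?S) \<le> card I"
    using degree_prod_monic_linear[OF assms(1), of "\<lambda>j. - e j"] by (intro degree_diff_le) auto
  fix z assume "z \<in> e ` I"
  then obtain k where k: "k \<in> I" "z = e k" by blast
  have "poly ?S z = casimir_coeff I e k * (\<Prod>j\<in>I - {k}. e k - e j)"
    using assms(1) k
    by (simp add: poly_sum poly_prod sum.remove) (auto intro!: sum.neutral prod_zero)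
  also have "\<dots> = (\<Prod>j\<in>I - {k}. e k - e j - 1)"
    unfolding casimir_coeff_def prod.distrib[symmetric]
  proof (rule prod.cong)
    fix j assume "j \<in> I - {k}"
    then have "e k \<noteq> e j"
      using assms(2) k(1) by (auto dest: inj_onD)
    then show "(1 - 1 / (e k - e j)) * (e k - e j) = e k - e j - 1"
      by (simp add: field_simps)
  qed simp
  also have "\<dots> = - poly ?P1 z"
    using assms(1) k by (simp add: poly_prod prod.remove algebra_simps)
  finally show "poly ?P1 z = poly (?P0 - ?S) z"
    using assms(1) k by (auto simp: poly_prod prod_zero)
qed

lemma fps_prod_linear_partial_fraction:
  fixes e :: "'b \<Rightarrow> 'a::field_char_0"
  assumes "finite I" and "inj_on e I"
  shows "(\<Prod>j\<in>I. 1 - fps_const (e j + 1) * fps_X) =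
    (\<Prod>j\<in>I. 1 - fps_const (e j) * fps_X) -
    fps_X * (\<Sum>i\<in>I. fps_const (casimir_coeff I e i) * (\<Prod>j\<in>I - {i}. 1 - fps_const (e j) * fps_X))"
proof -
  define a where "a = casimir_coeff I e"
  have homogenize: "(\<Prod>j\<in>J. 1 - c j * w) = w ^ card J * (\<Prod>j\<in>J. 1 / w - c j)"
    if "w \<noteq> 0" for J and c :: "'b \<Rightarrow> 'a" and w
  proof -
    have "(\<Prod>j\<in>J. 1 - c j * w) = (\<Prod>j\<in>J. w * (1 / w - c j))"
      using that by (simp add: right_diff_distrib mult.commute)
    then show ?thesis
      by (simp add: prod.distrib)
  qed
  have "(\<Prod>j\<in>I. 1 - (e j + 1) * w) =
      (\<Prod>j\<in>I. 1 - e j * w) - w * (\<Sum>i\<in>I. a i * (\<Prod>j\<in>I - {i}. 1 - e j * w))" for w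
  proof (cases "w = 0")
    case False
    have pf: "(\<Prod>j\<in>I. 1 / w - (e j + 1)) =
        (\<Prod>j\<in>I. 1 / w - e j) - (\<Sum>i\<in>I. a i * (\<Prod>j\<in>I - {i}. 1 / w - e j))"
      using arg_cong[OF prod_linear_partial_fraction[OF assms], of "\<lambda>p. poly p (1 / w)"]
      by (simp add: a_def poly_prod poly_sum algebra_simps)
    have scaled: "w ^ card I * (a i * (\<Prod>j\<in>I - {i}. 1 / w - e j)) =
        w * (a i * (\<Prod>j\<in>I - {i}. 1 - e j * w))" if "i \<in> I" for i
      using assms(1) that False
      by (auto simp: homogenize card_gt_0_iff power_eq_if[of w "card I"])
    have "(\<Prod>j\<in>I. 1 - (e j + 1) * w) = w ^ card I * (\<Prod>j\<in>I. 1 / w - (e j + 1))"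
      by (rule homogenize[OF False])
    also have "\<dots> = w ^ card I * (\<Prod>j\<in>I. 1 / w - e j) -
        (\<Sum>i\<in>I. w ^ card I * (a i * (\<Prod>j\<in>I - {i}. 1 / w - e j)))"
      by (simp add: pf right_diff_distrib sum_distrib_left)
    also have "\<dots> = (\<Prod>j\<in>I. 1 - e j * w) - w * (\<Sum>i\<in>I. a i * (\<Prod>j\<in>I - {i}. 1 - e j * w))"
      by (simp add: homogenize[OF False] scaled sum_distrib_left)
    finally show ?thesis .
  qed simp
  then have "(\<Prod>j\<in>I. [:1, - (e j + 1):]) =
      (\<Prod>j\<in>I. [:1, - e j:]) - [:0, 1:] * (\<Sum>i\<in>I. [:a i:] * (\<Prod>j\<in>I - {i}. [:1, - e j:]))"
    by (intro poly_eq_poly_eq_iff[THEN iffD1]) (simp add: fun_eq_iff poly_prod poly_sum algebra_simps)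
  moreover have "1 - fps_const c * fps_X = fps_of_poly [:1, - c:]" for c :: 'a
    by (simp add: fps_of_poly_linear')
  ultimately show ?thesis
    unfolding a_def fps_of_poly_fps_X[symmetric] fps_of_poly_const[symmetric]
    by (simp only: fps_of_poly_eq_iff flip: fps_of_poly_prod fps_of_poly_sum fps_of_poly_mult
        fps_of_poly_diff)
qed

lemma fps_linear_mult_geometric:
  "(1 - fps_const c * fps_X) * Abs_fps (\<lambda>n. c ^ n) = (1 :: 'a::comm_ring_1 fps)"
proof -
  have "(1 - fps_const c * fps_X) * Abs_fps (\<lambda>n. c ^ n) =
      Abs_fps (\<lambda>n. c ^ n) - fps_const c * (fps_X * Abs_fps (\<lambda>n. c ^ n))"
    by (simp add: algebra_simps)
  then show ?thesis
    by (intro fps_ext) (simp add: power_eq_if)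
qed

lemma fps_prod_nth_0: "(\<Prod>j\<in>I. f j) $ 0 = (\<Prod>j\<in>I. f j $ 0 :: 'a::comm_semiring_1)"
  by (induction I rule: infinite_finite_induct) auto

lemma fps_prod_linear_nth_1:
  "finite I \<Longrightarrow> (\<Prod>j\<in>I. 1 - fps_const (c j) * fps_X) $ 1 = - (\<Sum>j\<in>I. c j :: 'a::comm_ring_1)"
  by (induction I rule: finite_induct) (auto simp: fps_mult_nth_1 fps_prod_nth_0)

lemma casimir_power_sum_generating_function:
  fixes e :: "'b \<Rightarrow> 'a::field_char_0"
  assumes "finite I" and "inj_on e I"
  shows "(\<Prod>j\<in>I. 1 - fps_const (e j + 1) * fps_X) =
    (\<Prod>j\<in>I. 1 - fps_const (e j) * fps_X) * (1 - fps_X * Abs_fps (casimir_power_sum I e))"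
proof -
  define M where "M = (\<Prod>j\<in>I. 1 - fps_const (e j) * fps_X)"
  have D: "Abs_fps (casimir_power_sum I e) =
      (\<Sum>i\<in>I. fps_const (casimir_coeff I e i) * Abs_fps (\<lambda>n. e i ^ n))"
    by (rule fps_ext) (simp add: casimir_power_sum_def fps_sum_nth)
  have geometric: "M * (fps_const (casimir_coeff I e i) * Abs_fps (\<lambda>n. e i ^ n)) =
      fps_const (casimir_coeff I e i) * (\<Prod>j\<in>I - {i}. 1 - fps_const (e j) * fps_X)"
    if "i \<in> I" for i
    using assms(1) that fps_linear_mult_geometric[of "e i"]
    by (simp add: M_def prod.remove mult_ac)
  have "M * Abs_fps (casimir_power_sum I e) =
      (\<Sum>i\<in>I. fps_const (casimir_coeff I e i) * (\<Prod>j\<in>I - {i}. 1 - fps_const (e j) * fps_X))"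
    unfolding D sum_distrib_left using geometric by (rule sum.cong[OF refl])
  then show ?thesis
    unfolding fps_prod_linear_partial_fraction[OF assms] M_def[symmetric]
    by (simp add: right_diff_distrib mult.left_commute[of M])
qed

lemma casimir_power_sum_0:
  fixes e :: "'b \<Rightarrow> 'a::field_char_0"
  assumes "finite I" and "inj_on e I"
  shows "casimir_power_sum I e 0 = of_nat (card I)"
  using arg_cong[OF casimir_power_sum_generating_function[OF assms], of "\<lambda>f. f $ 1"]
    fps_prod_linear_nth_1[OF assms(1), of e] fps_prod_linear_nth_1[OF assms(1), of "\<lambda>j. e j + 1"]
  by (simp add: fps_prod_nth_0 sum.distrib)

lemma fps_linear_compose_uminus_X:
  "(1 + fps_const c * fps_X) oo - fps_X = 1 - fps_const c * (fps_X :: 'a::idom fps)"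
  "(1 - fps_const c * fps_X) oo - fps_X = 1 + fps_const c * (fps_X :: 'a::idom fps)"
  by (simp_all add: fps_compose_add_distrib fps_compose_sub_distrib fps_compose_mult_distrib)

lemma casimir_power_sum_reflection:
  fixes e :: "'b \<Rightarrow> 'a::field_char_0" and \<sigma> :: "'b \<Rightarrow> 'b"
  assumes "finite I" and "inj_on e I"
    and \<sigma>_closed: "\<And>j. j \<in> I \<Longrightarrow> \<sigma> j \<in> I"
    and \<sigma>_involution: "\<And>j. j \<in> I \<Longrightarrow> \<sigma> (\<sigma> j) = j"
    and e_\<sigma>: "\<And>j. j \<in> I \<Longrightarrow> e (\<sigma> j) = - 1 - e j"
  defines "D \<equiv> Abs_fps (casimir_power_sum I e)"
  shows "(1 - fps_X * D) * (1 + fps_X * (D oo - fps_X)) = 1"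
proof -
  define M where "M = (\<Prod>j\<in>I. 1 - fps_const (e j) * fps_X)"
  define P where "P = (\<Prod>j\<in>I. 1 + fps_const (e j) * fps_X)"
  have "(\<Prod>j\<in>I. 1 - fps_const (e j + 1) * fps_X) = P"
    unfolding P_def
  proof (rule prod.reindex_bij_witness[of _ \<sigma> \<sigma>])
    fix j assume "j \<in> I"
    then show "1 + fps_const (e (\<sigma> j)) * fps_X = 1 - fps_const (e j + 1) * fps_X"
      by (simp add: e_\<sigma> fps_const_neg[symmetric] del: fps_const_neg)
  qed (use \<sigma>_closed \<sigma>_involution in auto)
  then have PM: "P = M * (1 - fps_X * D)"
    using casimir_power_sum_generating_function[OF assms(1,2)] by (simp add: M_def D_def)
  have X0: "(- fps_X :: 'a fps) $ 0 = 0"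
    by simp
  have "P oo - fps_X = M" "M oo - fps_X = P"
    by (simp_all only: P_def M_def fps_compose_prod_distrib[OF X0] fps_linear_compose_uminus_X)
  then have MP: "M = P * (1 + fps_X * (D oo - fps_X))"
    using arg_cong[OF PM, of "\<lambda>f. f oo - fps_X"]
    by (simp add: fps_compose_mult_distrib fps_compose_sub_distrib)
  have "P * M = (M * (1 - fps_X * D)) * (P * (1 + fps_X * (D oo - fps_X)))"
    by (rule arg_cong2[where f = "(*)", OF PM MP])
  also have "\<dots> = (P * M) * ((1 - fps_X * D) * (1 + fps_X * (D oo - fps_X)))"
    by (simp only: ac_simps)
  finally have "P * M * 1 = (P * M) * ((1 - fps_X * D) * (1 + fps_X * (D oo - fps_X)))"
    by simp
  moreover have "(P * M) $ 0 = 1"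
    by (simp add: P_def M_def fps_prod_nth_0)
  ultimately show ?thesis
    by (metis mult_left_cancel one_neq_zero fps_zero_nth)
qed

lemma casimir_power_sum_odd:
  fixes e :: "'b \<Rightarrow> 'a::field_char_0" and \<sigma> :: "'b \<Rightarrow> 'b"
  assumes "finite I" and "inj_on e I"
    and "\<And>j. j \<in> I \<Longrightarrow> \<sigma> j \<in> I" and "\<And>j. j \<in> I \<Longrightarrow> \<sigma> (\<sigma> j) = j"
    and "\<And>j. j \<in> I \<Longrightarrow> e (\<sigma> j) = - 1 - e j"
    and "odd N"
  shows "casimir_power_sum I e N =
    - (\<Sum>k<N. (-1) ^ k * casimir_power_sum I e k * casimir_power_sum I e (N - 1 - k)) / 2"
proof -
  define d where "d = casimir_power_sum I e"
  define D where "D = Abs_fps d"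
  define D' where "D' = Abs_fps (\<lambda>n. (-1) ^ n * d n)"
  obtain m where m: "N = Suc m" "even m"
    using \<open>odd N\<close> by (cases N) auto
  have "D oo - fps_X = D'"
    by (simp add: D_def D'_def fps_compose_uminus')
  moreover have "(1 - fps_X * D) * (1 + fps_X * (D oo - fps_X)) = 1"
    unfolding D_def d_def
    by (rule casimir_power_sum_reflection[where e = e and \<sigma> = \<sigma>, OF assms(1-5)])
  ultimately have "(1 - fps_X * D) * (1 + fps_X * D') = 1"
    by simp
  then have "(1 + fps_X * (D' - D) - fps_X * (fps_X * (D * D'))) $ Suc (Suc m) = 0"
    by (simp add: algebra_simps)
  then have "(-1) ^ N * d N - d N = (D * D') $ m"
    by (simp add: D_def D'_def m(1))
  also have "\<dots> = (\<Sum>k\<le>m. d k * ((-1) ^ (m - k) * d (m - k)))"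
    by (simp add: fps_mult_nth D_def D'_def atLeast0AtMost)
  also have "\<dots> = (\<Sum>k<N. (-1) ^ k * d k * d (N - 1 - k))"
    unfolding m(1) lessThan_Suc_atMost using m(2)
    by (intro sum.cong) (auto simp: minus_one_power_iff)
  finally show ?thesis
    using \<open>odd N\<close> by (simp add: d_def field_simps) (metis minus_minus)
qed

lemma casimir_ev_eq_power_sum:
  "casimir_ev n p \<nu> = casimir_power_sum {1..n} (\<lambda>i. \<nu> i + of_nat n - of_nat i) p"
  unfolding casimir_ev_def casimir_power_sum_def casimir_coeff_def
proof (rule sum.cong[OF refl])
  fix i
  have "(\<Prod>j\<in>{1..n} - {i}. 1 - 1 / (\<nu> i - \<nu> j + of_nat j - of_nat i)) =
      (\<Prod>j\<in>{1..n} - {i}. 1 - 1 / ((\<nu> i + of_nat n - of_nat i) - (\<nu> j + of_nat n - of_nat j)))"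
    by (intro prod.cong) (simp_all add: algebra_simps)
  then show "(\<nu> i + of_nat n - of_nat i) ^ p * (\<Prod>j\<in>{1..n} - {i}. 1 - 1 / (\<nu> i - \<nu> j + of_nat j - of_nat i)) =
      (\<Prod>j\<in>{1..n} - {i}. 1 - 1 / ((\<nu> i + of_nat n - of_nat i) - (\<nu> j + of_nat n - of_nat j))) *
      (\<nu> i + of_nat n - of_nat i) ^ p"
    by (simp add: mult.commute)
qed

definition centered_restr_weight :: "nat \<Rightarrow> nat \<Rightarrow> (nat \<Rightarrow> complex) \<Rightarrow> nat \<Rightarrow> complex" where
  "centered_restr_weight r n x i = restr_weight r n x i + of_nat n / 2 - of_nat i"

definition centered_casimir :: "nat \<Rightarrow> nat \<Rightarrow> nat \<Rightarrow> (nat \<Rightarrow> complex) \<Rightarrow> complex" where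
  "centered_casimir r n q x = casimir_power_sum {1..n} (centered_restr_weight r n x) q"

lemma centered_restr_weight_reflect:
  assumes "2 * r \<le> n" and "j \<in> {1..n}"
  shows "centered_restr_weight r n x (n + 1 - j) = - 1 - centered_restr_weight r n x j"
  using assms by (auto simp: centered_restr_weight_def restr_weight_def field_simps)

lemma inj_on_centered_restr_weight:
  assumes "casimir_generic r n x"
  shows "inj_on (centered_restr_weight r n x) {1..n}"
proof (rule inj_onI, rule ccontr)
  fix i j assume "i \<in> {1..n}" "j \<in> {1..n}" "i \<noteq> j"
    and "centered_restr_weight r n x i = centered_restr_weight r n x j"
  then show False
    using assms by (auto simp: casimir_generic_def centered_restr_weight_def algebra_simps)
qed

lemma restr_casimir_eq_centered_casimir:
  "restr_casimir r n p x =
     (\<Sum>q\<le>p. of_nat (p choose q) * (of_nat n / 2) ^ (p - q) * centered_casimir r n q x)"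
proof -
  have "restr_casimir r n p x =
      casimir_power_sum {1..n} (\<lambda>i. centered_restr_weight r n x i + of_nat n / 2) p"
    unfolding restr_casimir_def casimir_ev_eq_power_sum centered_restr_weight_def
    by (simp add: algebra_simps)
  then show ?thesis
    by (simp only: casimir_power_sum_shift centered_casimir_def)
qed

lemma centered_casimir_eq_restr_casimir:
  "centered_casimir r n q x =
     (\<Sum>p\<le>q. of_nat (q choose p) * (- of_nat n / 2) ^ (q - p) * restr_casimir r n p x)"
proof -
  have "centered_casimir r n q x = casimir_power_sum {1..n}
      (\<lambda>i. restr_weight r n x i + of_nat n - of_nat i + (- of_nat n / 2)) q"
    unfolding centered_casimir_def centered_restr_weight_def by (simp add: algebra_simps)
  then show ?thesis
    by (simp only: casimir_power_sum_shift restr_casimir_def casimir_ev_eq_power_sum)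
qed

lemma centered_casimir_0:
  "casimir_generic r n x \<Longrightarrow> centered_casimir r n 0 x = of_nat n"
  using casimir_power_sum_0[OF _ inj_on_centered_restr_weight] by (simp add: centered_casimir_def)

lemma centered_casimir_odd:
  assumes "2 * r \<le> n" and "casimir_generic r n x" and "odd N"
  shows "centered_casimir r n N x =
    - (\<Sum>k<N. (-1) ^ k * centered_casimir r n k x * centered_casimir r n (N - 1 - k) x) / 2"
  unfolding centered_casimir_def
  by (rule casimir_power_sum_odd[where \<sigma> = "\<lambda>j. n + 1 - j"])
    (use assms inj_on_centered_restr_weight centered_restr_weight_reflect in auto)

definition even_expressible :: "nat \<Rightarrow> nat \<Rightarrow> ((nat \<Rightarrow> complex) \<Rightarrow> complex) \<Rightarrow> bool" where
  "even_expressible r n g \<longleftrightarrow>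
     (\<exists>f\<in>even_casimir_subalg r n. \<forall>x. casimir_generic r n x \<longrightarrow> g x = f x)"

lemma even_expressible_const: "even_expressible r n (\<lambda>_. c)"
  unfolding even_expressible_def by (auto intro!: bexI[of _ "\<lambda>_. c"] even_casimir_subalg.const)

lemma even_expressible_restr_casimir_even:
  "k \<ge> 1 \<Longrightarrow> even_expressible r n (restr_casimir r n (2 * k))"
  unfolding even_expressible_def by (blast intro: even_casimir_subalg.gen)

lemma even_expressible_add:
  "even_expressible r n f \<Longrightarrow> even_expressible r n g \<Longrightarrow> even_expressible r n (\<lambda>x. f x + g x)"
  unfolding even_expressible_def by (metis (no_types, lifting) even_casimir_subalg.add)

lemma even_expressible_mult:
  "even_expressible r n f \<Longrightarrow> even_expressible r n g \<Longrightarrow> even_expressible r n (\<lambda>x. f x * g x)"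
  unfolding even_expressible_def by (metis (no_types, lifting) even_casimir_subalg.mult)

lemma even_expressible_cong:
  "(\<And>x. casimir_generic r n x \<Longrightarrow> f x = g x) \<Longrightarrow> even_expressible r n g \<Longrightarrow>
    even_expressible r n f"
  unfolding even_expressible_def by metis

lemma even_expressible_sum:
  "(\<And>s. s \<in> S \<Longrightarrow> even_expressible r n (f s)) \<Longrightarrow>
    even_expressible r n (\<lambda>x. \<Sum>s\<in>S. f s x)"
proof (induction S rule: infinite_finite_induct)
  case (insert s S)
  then show ?case
    by (simp add: even_expressible_add)
qed (simp_all add: even_expressible_const)

lemma even_expressible_linear_combination:
  "(\<And>s. s \<in> S \<Longrightarrow> even_expressible r n (f s)) \<Longrightarrow>
    even_expressible r n (\<lambda>x. \<Sum>s\<in>S. c s * f s x)"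
  by (intro even_expressible_sum even_expressible_mult even_expressible_const)

lemma even_expressible_centered_casimir:
  assumes "\<And>p. p \<le> q \<Longrightarrow> even_expressible r n (restr_casimir r n p)"
  shows "even_expressible r n (centered_casimir r n q)"
proof -
  have "centered_casimir r n q = (\<lambda>x. \<Sum>p\<le>q.
      (of_nat (q choose p) * (- of_nat n / 2) ^ (q - p)) * restr_casimir r n p x)"
    by (intro ext) (simp only: centered_casimir_eq_restr_casimir)
  then show ?thesis
    using assms by (auto intro: even_expressible_linear_combination)
qed

lemma even_expressible_centered_casimir_odd:
  assumes "2 * r \<le> n" and "odd p"
    and below: "\<And>q. q < p \<Longrightarrow> even_expressible r n (centered_casimir r n q)"
  shows "even_expressible r n (centered_casimir r n p)"
proof (rule even_expressible_cong)
  show "centered_casimir r n p x =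
      (- 1 / 2) * (\<Sum>k<p. (-1) ^ k * (centered_casimir r n k x * centered_casimir r n (p - 1 - k) x))"
    if "casimir_generic r n x" for x
    using centered_casimir_odd[OF assms(1) that assms(2)] by (simp add: mult_ac)
  have products:
    "even_expressible r n (\<lambda>x. centered_casimir r n k x * centered_casimir r n (p - 1 - k) x)"
    if "k < p" for k
    using that \<open>odd p\<close> by (intro even_expressible_mult below) auto
  show "even_expressible r n (\<lambda>x. (- 1 / 2) *
      (\<Sum>k<p. (-1) ^ k * (centered_casimir r n k x * centered_casimir r n (p - 1 - k) x)))"
    by (intro even_expressible_mult[OF even_expressible_const] even_expressible_linear_combination
        products) simp
qed

lemma even_expressible_restr_casimir:
  assumes "2 * r \<le> n"
  shows "even_expressible r n (restr_casimir r n p)"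
proof (induction p rule: less_induct)
  case (less p)
  consider "p = 0" | "even p" "p \<noteq> 0" | "odd p"
    by blast
  then show ?case
  proof cases
    case 1
    have "restr_casimir r n p x = of_nat n" if "casimir_generic r n x" for x
      using centered_casimir_0[OF that] by (simp add: restr_casimir_eq_centered_casimir 1)
    then show ?thesis
      by (rule even_expressible_cong[OF _ even_expressible_const])
  next
    case 2
    then obtain k where "p = 2 * k" "k \<ge> 1"
      by (auto elim!: evenE)
    then show ?thesis
      by (simp add: even_expressible_restr_casimir_even)
  next
    case 3
    have below: "even_expressible r n (centered_casimir r n q)" if "q < p" for q
      using that less by (intro even_expressible_centered_casimir) auto
    have "even_expressible r n (centered_casimir r n q)" if "q \<in> {..p}" for q
      using that below even_expressible_centered_casimir_odd[OF assms 3 below]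
      by (cases "q = p") auto
    moreover have "restr_casimir r n p = (\<lambda>x. \<Sum>q\<le>p.
        (of_nat (p choose q) * (of_nat n / 2) ^ (p - q)) * centered_casimir r n q x)"
      by (intro ext) (simp only: restr_casimir_eq_centered_casimir)
    ultimately show ?thesis
      by (auto intro: even_expressible_linear_combination)
  qed
qed

theorem lemma3:
  fixes r n i :: nat
  assumes "r \<ge> 1" and "n \<ge> 2 * r"
  shows "\<exists>f \<in> even_casimir_subalg r n.
           \<forall>x. casimir_generic r n x \<longrightarrow> restr_casimir r n (2 * i + 1) x = f x"
  using even_expressible_restr_casimir[OF assms(2)] unfolding even_expressible_def .

end
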